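(* On the set $\{(u,W):\|W\|_2^2\le B_W^2,\ u_i\le B_u \text{ for all } i\}$, the function $f(u,W)$ is strongly convex with strong convexity constant at least $\min\{\exp(-B_u),\mu\}$.
   Context: Data: $(y_i,x_i)$, $i=1,\dots,N$, $x_i\in\mathbb{R}^D$, $y_i\in\{1,\dots,K\}$, $K\ge 2$; $\mu>0$; $u\in\mathbb{R}^N$, $W=[w_1,\dots,w_K]\in\mathbb{R}^{D\times K}$ with Frobenius norm $\|W\|_2$; $$f(u,W)=\sum_{i=1}^N\Big[u_i+e^{-u_i}+\sum_{k\ne y_i}e^{x_i^\top(w_k-w_{y_i})-u_i}\Big]+\tfrac{\mu}{2}\|W\|_2^2.$$ $B_W^2=\frac{2}{\mu}N\log K$, $B_x=\max_i\|x_i\|_2$, $B_u=\log(1+(K-1)e^{2B_xB_W})$. *)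

theory Defs
  imports "HOL-Analysis.Analysis"
begin

definition strongly_convex_on :: "'a::real_normed_vector set \<Rightarrow> ('a \<Rightarrow> real) \<Rightarrow> real \<Rightarrow> bool" where
  "strongly_convex_on S f m \<longleftrightarrow> convex S \<and>
     (\<forall>x\<in>S. \<forall>y\<in>S. \<forall>t\<in>{0..1}.
        f ((1 - t) *\<^sub>R x + t *\<^sub>R y)
          \<le> (1 - t) * f x + t * f y - m / 2 * t * (1 - t) * (norm (x - y))\<^sup>2)"

text \<open>Samples indexed by finite type 'n (N = CARD('n)), features by 'd (D = CARD('d)),
  classes by 'k (K = CARD('k)). W has entries W \$ d \$ k, its k-th column is w_k;
  norm W is the Frobenius norm.\<close>
definition obj :: "real \<Rightarrow> ('n::finite \<Rightarrow> real^'d::finite) \<Rightarrow> ('n \<Rightarrow> 'k::finite)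
    \<Rightarrow> (real^'n) \<times> (real^'k^'d) \<Rightarrow> real" where
  "obj \<mu> x y z = (let u = fst z; W = snd z in
     (\<Sum>i\<in>UNIV. u $ i + exp (- (u $ i))
        + (\<Sum>k\<in>UNIV - {y i}.
             exp ((\<Sum>d\<in>UNIV. x i $ d * (W $ d $ k - W $ d $ y i)) - u $ i)))
     + \<mu> / 2 * (norm W)\<^sup>2)"

definition BW2 :: "real \<Rightarrow> 'n::finite itself \<Rightarrow> 'k::finite itself \<Rightarrow> real" where
  "BW2 \<mu> _ _ = 2 / \<mu> * real CARD('n) * ln (real CARD('k))"

definition Bx :: "('n::finite \<Rightarrow> real^'d::finite) \<Rightarrow> real" where
  "Bx x = Max (range (\<lambda>i. norm (x i)))"

definition Bu :: "real \<Rightarrow> ('n::finite \<Rightarrow> real^'d::finite) \<Rightarrow> 'k::finite itself \<Rightarrow> real" where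
  "Bu \<mu> x K = ln (1 + (real CARD('k) - 1) * exp (2 * Bx x * sqrt (BW2 \<mu> TYPE('n) K)))"

end

theory Submission
  imports Defs
begin

text \<open>In an inner-product space, strong convexity with modulus m is convexity of
  f x - m/2 * norm x ^ 2, so strong convexity is preserved under adding convex functions and
  under separable sums over product spaces. The objective splits as
  (\<Sum>i. exp (- u i)) + \<mu>/2 * norm W ^ 2 + (a sum of the u i and of exponentials of affine
  functions of (u, W)). The last part is convex. Since exp (- s) has second derivative
  exp (- s) \<ge> exp (- B) for s \<le> B, the first part is exp (- B)-strongly convex on u i \<le> B,
  and the second part is \<mu>-strongly convex in W.\<close>

lemma norm_combination_power2:
  fixes a b :: "'a::real_inner" and t :: real
  shows "(norm ((1 - t) *\<^sub>R a + t *\<^sub>R b))\<^sup>2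
           = (1 - t) * (norm a)\<^sup>2 + t * (norm b)\<^sup>2 - t * (1 - t) * (norm (a - b))\<^sup>2"
  unfolding power2_norm_eq_inner
  by (simp add: inner_add_left inner_add_right inner_diff_left inner_diff_right inner_commute algebra_simps)

lemma power2_norm_vec: "(norm (v::real^'n))\<^sup>2 = (\<Sum>i\<in>UNIV. (v $ i)\<^sup>2)"
  unfolding power2_norm_eq_inner by (simp add: inner_vec_def power2_eq_square)

lemma convex_norm_power2_le:
  "convex {x::'a::real_inner. (norm x)\<^sup>2 \<le> C}"
proof (rule convexI)
  fix a b :: 'a and s t :: real
  assume ab: "a \<in> {x. (norm x)\<^sup>2 \<le> C}" "b \<in> {x. (norm x)\<^sup>2 \<le> C}"
    and st: "0 \<le> s" "0 \<le> t" "s + t = 1"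
  then have "(norm (s *\<^sub>R a + t *\<^sub>R b))\<^sup>2 \<le> s * (norm a)\<^sup>2 + t * (norm b)\<^sup>2"
    using norm_combination_power2[of t a b] by (simp add: eq_diff_eq[symmetric])
  also have "\<dots> \<le> s * C + t * C"
    using ab st by (intro add_mono mult_left_mono) auto
  finally show "s *\<^sub>R a + t *\<^sub>R b \<in> {x. (norm x)\<^sup>2 \<le> C}"
    using st by (simp add: distrib_right[symmetric])
qed

lemma convex_on_compose_linear:
  assumes "convex_on T g" "linear h" "h ` S \<subseteq> T" "convex S"
  shows "convex_on S (\<lambda>x. g (h x))"
proof (rule convex_onI)
  fix t :: real and a b assume "0 < t" "t < 1" "a \<in> S" "b \<in> S"
  then show "g (h ((1 - t) *\<^sub>R a + t *\<^sub>R b)) \<le> (1 - t) * g (h a) + t * g (h b)"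
    using convex_onD[OF assms(1), of t "h a" "h b"] assms(3)
    by (auto simp: linear_add[OF assms(2)] linear_scale[OF assms(2)])
qed (fact assms(4))

lemma convex_on_linear:
  assumes "linear h" "convex S"
  shows "convex_on S h"
  using convex_on_compose_linear[of UNIV "\<lambda>s. s" h S] assms by (simp add: convex_on_ident)

lemma convex_on_sum_fun:
  assumes "finite I" "convex S" "\<And>i. i \<in> I \<Longrightarrow> convex_on S (f i)"
  shows "convex_on S (\<lambda>x. \<Sum>i\<in>I. f i x)"
  using assms by (induction I rule: finite_induct) (auto simp: convex_on_const)

lemma strongly_convex_on_iff_convex_on:
  fixes f :: "'a::real_inner \<Rightarrow> real"
  shows "strongly_convex_on S f m \<longleftrightarrow> convex_on S (\<lambda>x. f x - m / 2 * (norm x)\<^sup>2)"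
proof -
  have shift: "f c \<le> (1 - t) * f a + t * f b - m / 2 * t * (1 - t) * (norm (a - b))\<^sup>2
      \<longleftrightarrow> f c - m / 2 * (norm c)\<^sup>2 \<le> (1 - t) * (f a - m / 2 * (norm a)\<^sup>2) + t * (f b - m / 2 * (norm b)\<^sup>2)"
    if "c = (1 - t) *\<^sub>R a + t *\<^sub>R b" for a b c t
  proof -
    have "m / 2 * (norm c)\<^sup>2 = (1 - t) * (m / 2 * (norm a)\<^sup>2) + t * (m / 2 * (norm b)\<^sup>2)
                                - m / 2 * t * (1 - t) * (norm (a - b))\<^sup>2"
      unfolding that norm_combination_power2 by (simp add: field_simps)
    then show ?thesis by (simp add: algebra_simps) linarith
  qed
  show ?thesis
  proof
    assume sc: "strongly_convex_on S f m"
    show "convex_on S (\<lambda>x. f x - m / 2 * (norm x)\<^sup>2)"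
    proof (rule convex_onI)
      fix t :: real and a b assume "0 < t" "t < 1" "a \<in> S" "b \<in> S"
      with sc have "f ((1 - t) *\<^sub>R a + t *\<^sub>R b)
          \<le> (1 - t) * f a + t * f b - m / 2 * t * (1 - t) * (norm (a - b))\<^sup>2"
        unfolding strongly_convex_on_def by simp
      then show "f ((1 - t) *\<^sub>R a + t *\<^sub>R b) - m / 2 * (norm ((1 - t) *\<^sub>R a + t *\<^sub>R b))\<^sup>2
          \<le> (1 - t) * (f a - m / 2 * (norm a)\<^sup>2) + t * (f b - m / 2 * (norm b)\<^sup>2)"
        by (rule shift[OF refl, THEN iffD1])
    qed (use sc in \<open>simp add: strongly_convex_on_def\<close>)
  next
    assume cv: "convex_on S (\<lambda>x. f x - m / 2 * (norm x)\<^sup>2)"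
    show "strongly_convex_on S f m"
      unfolding strongly_convex_on_def
    proof (intro conjI ballI)
      fix a b and t :: real assume "a \<in> S" "b \<in> S" "t \<in> {0..1}"
      then show "f ((1 - t) *\<^sub>R a + t *\<^sub>R b)
          \<le> (1 - t) * f a + t * f b - m / 2 * t * (1 - t) * (norm (a - b))\<^sup>2"
        using convex_onD[OF cv, of t a b] by (intro shift[OF refl, THEN iffD2]) simp
    qed (fact convex_on_imp_convex[OF cv])
  qed
qed

lemma strongly_convex_on_mono:
  assumes "strongly_convex_on S f m" "m' \<le> m"
  shows "strongly_convex_on S f m'"
  unfolding strongly_convex_on_def
proof (intro conjI ballI)
  show "convex S" using assms(1) by (simp add: strongly_convex_on_def)
  fix a b and t :: real assume ab: "a \<in> S" "b \<in> S" and t: "t \<in> {0..1}"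
  have "m' / 2 * t * (1 - t) * (norm (a - b))\<^sup>2 \<le> m / 2 * t * (1 - t) * (norm (a - b))\<^sup>2"
    using t assms(2) by (intro mult_right_mono) auto
  with assms(1) ab t show "f ((1 - t) *\<^sub>R a + t *\<^sub>R b)
      \<le> (1 - t) * f a + t * f b - m' / 2 * t * (1 - t) * (norm (a - b))\<^sup>2"
    unfolding strongly_convex_on_def by fastforce
qed

lemma strongly_convex_on_add_convex_on:
  fixes f :: "'a::real_inner \<Rightarrow> real"
  assumes "strongly_convex_on S f m" "convex_on S g"
  shows "strongly_convex_on S (\<lambda>x. f x + g x) m"
  using convex_on_add[OF assms(1)[unfolded strongly_convex_on_iff_convex_on] assms(2)]
  unfolding strongly_convex_on_iff_convex_on by (simp add: algebra_simps)

lemma strongly_convex_on_norm_power2: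
  fixes S :: "'a::real_inner set"
  assumes "convex S"
  shows "strongly_convex_on S (\<lambda>x. c / 2 * (norm x)\<^sup>2) c"
  using assms unfolding strongly_convex_on_iff_convex_on by (simp add: convex_on_const)

lemma strongly_convex_on_Times:
  fixes f :: "'a::real_inner \<Rightarrow> real" and g :: "'b::real_inner \<Rightarrow> real"
  assumes "strongly_convex_on A f m" "strongly_convex_on B g m"
  shows "strongly_convex_on (A \<times> B) (\<lambda>z. f (fst z) + g (snd z)) m"
proof -
  let ?F = "\<lambda>a. f a - m / 2 * (norm a)\<^sup>2" and ?G = "\<lambda>b. g b - m / 2 * (norm b)\<^sup>2"
  have F: "convex_on A ?F" and G: "convex_on B ?G"
    using assms by (simp_all add: strongly_convex_on_iff_convex_on)
  then have AB: "convex (A \<times> B)"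
    by (simp add: convex_Times convex_on_imp_convex)
  have "convex_on (A \<times> B) (\<lambda>z. ?F (fst z))"
    by (rule convex_on_compose_linear[OF F linear_fst _ AB]) auto
  moreover have "convex_on (A \<times> B) (\<lambda>z. ?G (snd z))"
    by (rule convex_on_compose_linear[OF G linear_snd _ AB]) auto
  ultimately have "convex_on (A \<times> B) (\<lambda>z. ?F (fst z) + ?G (snd z))"
    by (rule convex_on_add)
  moreover have "(\<lambda>z. ?F (fst z) + ?G (snd z)) = (\<lambda>z. f (fst z) + g (snd z) - m / 2 * (norm z)\<^sup>2)"
    by (auto simp: norm_Pair algebra_simps)
  ultimately show ?thesis
    by (simp add: strongly_convex_on_iff_convex_on)
qed

lemma strongly_convex_on_sum_vec_nth:
  fixes g :: "real \<Rightarrow> real"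
  assumes "strongly_convex_on T g m"
  shows "strongly_convex_on {u::real^'n. \<forall>i. u $ i \<in> T} (\<lambda>u. \<Sum>i\<in>UNIV. g (u $ i)) m"
proof -
  let ?S = "{u::real^'n. \<forall>i. u $ i \<in> T}"
  have cvT: "convex_on T (\<lambda>s. g s - m / 2 * s\<^sup>2)"
    using assms by (simp add: strongly_convex_on_iff_convex_on)
  have "?S = (\<Inter>i. (\<lambda>u. u $ i) -` T)" by auto
  then have "convex ?S"
    using convex_on_imp_convex[OF cvT]
    by (simp add: convex_INT convex_linear_vimage bounded_linear.linear[OF bounded_linear_vec_nth])
  then have "convex_on ?S (\<lambda>u. \<Sum>i\<in>UNIV. g (u $ i) - m / 2 * (u $ i)\<^sup>2)"
    by (intro convex_on_sum_fun convex_on_compose_linear[OF cvT])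
       (auto simp: bounded_linear.linear[OF bounded_linear_vec_nth])
  then show ?thesis
    unfolding strongly_convex_on_iff_convex_on power2_norm_vec
    by (simp add: sum_subtractf sum_distrib_left)
qed

lemma strongly_convex_on_exp_neg:
  "strongly_convex_on {..B} (\<lambda>s. exp (- s)) (exp (- B))"
  unfolding strongly_convex_on_iff_convex_on real_norm_def power2_abs
proof (rule convex_on_realI[where f' = "\<lambda>s. - exp (- s) - exp (- B) * s"])
  show "connected {..B}" by simp
next
  fix s :: real
  show "((\<lambda>s. exp (- s) - exp (- B) / 2 * s\<^sup>2) has_real_derivative - exp (- s) - exp (- B) * s) (at s)"
    by (auto intro!: derivative_eq_intros)
next
  fix p q :: real assume pq: "p \<in> {..B}" "q \<in> {..B}" "p \<le> q"
  have "exp (- q) * (1 + (q - p)) \<le> exp (- q) * exp (q - p)"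
    by (intro mult_left_mono exp_ge_add_one_self) simp
  then have "exp (- q) + exp (- q) * (q - p) \<le> exp (- p)"
    by (simp add: algebra_simps flip: exp_add)
  moreover have "exp (- B) * (q - p) \<le> exp (- q) * (q - p)"
    using pq by (intro mult_right_mono) auto
  ultimately show "- exp (- p) - exp (- B) * p \<le> - exp (- q) - exp (- B) * q"
    by (simp add: algebra_simps)
qed

definition obj_linear_exp_terms :: "('n::finite \<Rightarrow> real^'d::finite) \<Rightarrow> ('n \<Rightarrow> 'k::finite)
    \<Rightarrow> (real^'n) \<times> (real^'k^'d) \<Rightarrow> real" where
  "obj_linear_exp_terms x y z = (\<Sum>i\<in>UNIV. fst z $ i
     + (\<Sum>k\<in>UNIV - {y i}. exp ((\<Sum>d\<in>UNIV. x i $ d * (snd z $ d $ k - snd z $ d $ y i)) - fst z $ i)))"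

lemma obj_split:
  "obj \<mu> x y z = (\<Sum>i\<in>UNIV. exp (- (fst z $ i))) + \<mu> / 2 * (norm (snd z))\<^sup>2 + obj_linear_exp_terms x y z"
  unfolding obj_def obj_linear_exp_terms_def by (simp add: Let_def sum.distrib algebra_simps)

lemma convex_on_obj_linear_exp_terms:
  fixes x :: "'n::finite \<Rightarrow> real^'d::finite" and y :: "'n \<Rightarrow> 'k::finite"
  shows "convex_on UNIV (obj_linear_exp_terms x y)"
proof -
  have "linear (\<lambda>z::(real^'n) \<times> (real^'k^'d). fst z $ i)" for i
    by (rule linearI) auto
  moreover have "linear (\<lambda>z::(real^'n) \<times> (real^'k^'d).
      (\<Sum>d\<in>UNIV. x i $ d * (snd z $ d $ k - snd z $ d $ y i)) - fst z $ i)" for i k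
    by (rule linearI) (simp_all add: algebra_simps sum_distrib_left sum.distrib[symmetric] sum_subtractf[symmetric])
  ultimately show ?thesis
    unfolding obj_linear_exp_terms_def
    by (intro convex_on_sum_fun convex_on_add convex_on_linear convex_on_compose_linear[OF exp_convex]) auto
qed

theorem lemma3:
  fixes \<mu> :: real and x :: "'n::finite \<Rightarrow> real^'d::finite" and y :: "'n \<Rightarrow> 'k::finite"
  assumes "\<mu> > 0" and "CARD('k) \<ge> 2"
  shows "strongly_convex_on
           {(u, W). (norm W)\<^sup>2 \<le> BW2 \<mu> TYPE('n) TYPE('k) \<and> (\<forall>i. u $ i \<le> Bu \<mu> x TYPE('k))}
           (obj \<mu> x y) (min (exp (- Bu \<mu> x TYPE('k))) \<mu>)"
proof -
  \<comment> \<open>The hypotheses on \<mu> and K only make B_W and B_u meaningful; the bound holds for all \<mu>, K.\<close>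
  define B where "B = Bu \<mu> x TYPE('k)"
  define C where "C = BW2 \<mu> TYPE('n) TYPE('k)"
  define m where "m = min (exp (- B)) \<mu>"
  define U :: "(real^'n) set" where "U = {u. \<forall>i. u $ i \<in> {..B}}"
  define V :: "(real^'k^'d) set" where "V = {W. (norm W)\<^sup>2 \<le> C}"
  have "strongly_convex_on U (\<lambda>u. \<Sum>i\<in>UNIV. exp (- (u $ i))) m"
    unfolding U_def m_def
    by (rule strongly_convex_on_mono[OF strongly_convex_on_sum_vec_nth[OF strongly_convex_on_exp_neg]]) simp
  moreover have "strongly_convex_on V (\<lambda>W. \<mu> / 2 * (norm W)\<^sup>2) m"
    unfolding V_def m_def
    by (rule strongly_convex_on_mono[OF strongly_convex_on_norm_power2[OF convex_norm_power2_le]]) simp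
  ultimately have UV: "strongly_convex_on (U \<times> V)
      (\<lambda>z. (\<Sum>i\<in>UNIV. exp (- (fst z $ i))) + \<mu> / 2 * (norm (snd z))\<^sup>2) m"
    using strongly_convex_on_Times by fastforce
  then have "strongly_convex_on (U \<times> V)
      (\<lambda>z. (\<Sum>i\<in>UNIV. exp (- (fst z $ i))) + \<mu> / 2 * (norm (snd z))\<^sup>2 + obj_linear_exp_terms x y z) m"
    by (rule strongly_convex_on_add_convex_on[OF _ convex_on_subset[OF convex_on_obj_linear_exp_terms]])
       (use UV in \<open>auto simp: strongly_convex_on_def\<close>)
  moreover have "U \<times> V = {(u, W). (norm W)\<^sup>2 \<le> C \<and> (\<forall>i. u $ i \<le> B)}"
    unfolding U_def V_def by auto
  ultimately show ?thesis
    unfolding B_def C_def m_def obj_split[abs_def] by simp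
qed

end
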